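(* Let $\lambda,\mu\in\Lambda$ and $g,h\in W$, and put $A=\kappa(\lambda,g,\mu)$, $B=\kappa(\lambda,h,\mu)$. If $h\le g$ in the Bruhat order, then $B\le_{\mathrm{alg}}A$.
   Context: Fix integers $r\ge0$, $d\ge2$, $n=2r+2$, $D=2d+2$. $W$ is the group of bijections $g:\mathbb{Z}\to\mathbb{Z}$ with $g(i+D)=g(i)+D$, $g(-i)=-g(i)$, a Coxeter group of type $\widetilde C_d$ with simple reflections $s_0,\dots,s_d$ where (elements determined by values on $1,\dots,d$) $s_0(1)=-1$, $s_0(k)=k$ ($k\ge2$); $s_d(d)=d+2$, $s_d(k)=k$ ($k<d$); $s_i$ ($1\le i\le d-1$) swaps $i,i+1$; $\le$ is its Bruhat order. $\Lambda$ is the set of $\lambda=(\lambda_0,\dots,\lambda_{r+1})\in\mathbb{N}^{r+2}$ with sum $d$, $\lambda_{0,i}=\lambda_0+\dots+\lambda_i$; $R_0^\lambda=[-\lambda_0..\lambda_0]$, $R_i^\lambda=(\lambda_{0,i-1}..\lambda_{0,i}]$ ($1\le i\le r$), $R^\lambda_{r+1}=[d+1-\lambda_{r+1}..d+1+\lambda_{r+1}]$, extended by $R^\lambda_{-i}=-R^\lambda_i$, $R^\lambda_{i+n}=R^\lambda_i+D$. $\kappa(\lambda,g,\mu)=(|R_i^\lambda\cap g(R_j^\mu)|)_{i,j\in\mathbb{Z}}$. For such a matrix $A=(a_{ij})$ (with $a_{00},a_{r+1,r+1}$ odd) set $a'_{ii}=(a_{ii}-1)/2$ for $i\in\{0,r+1\}$,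 $\mathrm{row}_{\mathfrak c}(A)=(a'_{00}+\sum_{j\ge1}a_{0j},\ \sum_ja_{1j},\dots,\sum_ja_{rj},\ a'_{r+1,r+1}+\sum_{j\le r}a_{r+1,j})$ and $\mathrm{col}_{\mathfrak c}(A)$ analogously with columns, and $\sigma_{ij}(A)=\sum_{x\le i,\ y\ge j}a_{xy}$. Write $A\le_{\mathrm{alg}}B$ iff $\mathrm{row}_{\mathfrak c}(A)=\mathrm{row}_{\mathfrak c}(B)$, $\mathrm{col}_{\mathfrak c}(A)=\mathrm{col}_{\mathfrak c}(B)$ and $\sigma_{ij}(A)\le\sigma_{ij}(B)$ for all $i<j$. *)

theory Defs
  imports Main
begin

section \<open>The group W of type affine C_d\<close>

definition DD :: "nat \<Rightarrow> int" where "DD d = 2 * int d + 2"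

definition Wgrp :: "nat \<Rightarrow> (int \<Rightarrow> int) set" where
  "Wgrp d = {g. bij g \<and> (\<forall>i. g (i + DD d) = g i + DD d) \<and> (\<forall>i. g (- i) = - g i)}"

text \<open>Value of the simple reflection s_k on a residue m in [0, D).\<close>
definition sres :: "nat \<Rightarrow> nat \<Rightarrow> int \<Rightarrow> int" where
  "sres d k m =
    (let D = DD d; kk = int k in
     if k = 0 then (if m = 1 then -1 else if m = D - 1 then D + 1 else m)
     else if k = d then (if m = int d then int d + 2 else if m = int d + 2 then int d else m)
     else if k < d then
       (if m = kk then kk + 1 else if m = kk + 1 then kk
        else if m = D - kk then D - kk - 1 else if m = D - kk - 1 then D - kk else m)
     else m)"

definition sref :: "nat \<Rightarrow> nat \<Rightarrow> int \<Rightarrow> int" where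
  "sref d k i = DD d * (i div DD d) + sres d k (i mod DD d)"

definition wlen :: "nat \<Rightarrow> (int \<Rightarrow> int) \<Rightarrow> nat" where
  "wlen d g = (LEAST n. \<exists>ws. length ws = n \<and> set ws \<subseteq> {0..d} \<and>
                         foldr (\<lambda>k f. sref d k \<circ> f) ws id = g)"

definition reflections :: "nat \<Rightarrow> (int \<Rightarrow> int) set" where
  "reflections d = {w \<circ> sref d k \<circ> inv w | w k. w \<in> Wgrp d \<and> k \<le> d}"

definition bruhat_step :: "nat \<Rightarrow> ((int \<Rightarrow> int) \<times> (int \<Rightarrow> int)) set" where
  "bruhat_step d = {(x, x \<circ> t) | x t. x \<in> Wgrp d \<and> t \<in> reflections d \<and> wlen d x < wlen d (x \<circ> t)}"

definition bruhat_le :: "nat \<Rightarrow> (int \<Rightarrow> int) \<Rightarrow> (int \<Rightarrow> int) \<Rightarrow> bool" where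
  "bruhat_le d h g \<longleftrightarrow> h \<in> Wgrp d \<and> g \<in> Wgrp d \<and> (h, g) \<in> (bruhat_step d)\<^sup>*"

text \<open>lambda = (lambda_0, ..., lambda_{r+1}) as a list of length r+2.\<close>
definition Lambda :: "nat \<Rightarrow> nat \<Rightarrow> nat list set" where
  "Lambda r d = {l. length l = r + 2 \<and> sum_list l = d}"

definition lam0 :: "nat list \<Rightarrow> nat \<Rightarrow> int" where
  "lam0 l i = int (sum_list (take (Suc i) l))"

definition Rbase :: "nat \<Rightarrow> nat \<Rightarrow> nat list \<Rightarrow> nat \<Rightarrow> int set" where
  "Rbase r d l j =
    (if j = 0 then {- int (l ! 0) .. int (l ! 0)}
     else if j \<le> r then {lam0 l (j - 1) + 1 .. lam0 l j}
     else {int d + 1 - int (l ! (r + 1)) .. int d + 1 + int (l ! (r + 1))})"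

text \<open>R_i for all integers i, via R_{-i} = -R_i and R_{i+n} = R_i + D, n = 2r+2.\<close>
definition Rset :: "nat \<Rightarrow> nat \<Rightarrow> nat list \<Rightarrow> int \<Rightarrow> int set" where
  "Rset r d l i =
    (let n = 2 * int r + 2; q = i div n; m = i mod n in
     if m \<le> int r + 1 then (\<lambda>x. x + q * DD d) ` Rbase r d l (nat m)
     else (\<lambda>x. (q + 1) * DD d - x) ` Rbase r d l (nat (n - m)))"

definition kappa :: "nat \<Rightarrow> nat \<Rightarrow> nat list \<Rightarrow> (int \<Rightarrow> int) \<Rightarrow> nat list \<Rightarrow> int \<Rightarrow> int \<Rightarrow> int" where
  "kappa r d l g m i j = int (card (Rset r d l i \<inter> g ` Rset r d m j))"

definition fsum :: "('a \<Rightarrow> int) \<Rightarrow> 'a set \<Rightarrow> int" where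
  "fsum f S = sum f {x \<in> S. f x \<noteq> 0}"

definition rowc :: "nat \<Rightarrow> (int \<Rightarrow> int \<Rightarrow> int) \<Rightarrow> int list" where
  "rowc r A = map (\<lambda>i.
      if i = 0 then (A 0 0 - 1) div 2 + fsum (\<lambda>j. A 0 j) {1..}
      else if i \<le> r then fsum (\<lambda>j. A (int i) j) UNIV
      else (A (int r + 1) (int r + 1) - 1) div 2 + fsum (\<lambda>j. A (int r + 1) j) {..int r})
    [0..<r + 2]"

definition colc :: "nat \<Rightarrow> (int \<Rightarrow> int \<Rightarrow> int) \<Rightarrow> int list" where
  "colc r A = map (\<lambda>j.
      if j = 0 then (A 0 0 - 1) div 2 + fsum (\<lambda>i. A i 0) {1..}
      else if j \<le> r then fsum (\<lambda>i. A i (int j)) UNIV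
      else (A (int r + 1) (int r + 1) - 1) div 2 + fsum (\<lambda>i. A i (int r + 1)) {..int r})
    [0..<r + 2]"

definition sigma :: "(int \<Rightarrow> int \<Rightarrow> int) \<Rightarrow> int \<Rightarrow> int \<Rightarrow> int" where
  "sigma A i j = fsum (\<lambda>(x, y). A x y) {(x, y). x \<le> i \<and> j \<le> y}"

definition alg_le :: "nat \<Rightarrow> (int \<Rightarrow> int \<Rightarrow> int) \<Rightarrow> (int \<Rightarrow> int \<Rightarrow> int) \<Rightarrow> bool" where
  "alg_le r A B \<longleftrightarrow> rowc r A = rowc r B \<and> colc r A = colc r B \<and>
     (\<forall>i j. i < j \<longrightarrow> sigma A i j \<le> sigma B i j)"

end

theory Submission
  imports Defs "HOL-Number_Theory.Cong"
begin

text \<open>Since the sets \<open>R\<^sub>i\<close> are consecutive intervals partitioning \<open>\<int>\<close>, the corner sum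
  \<open>\<sigma>\<^sub>i\<^sub>j(\<kappa>(\<lambda>, g, \<mu>))\<close> counts the \<open>z\<close> above the left end of \<open>R\<^sup>\<mu>\<^sub>j\<close> with \<open>g z\<close> at most the right
  end of \<open>R\<^sup>\<lambda>\<^sub>i\<close>. Every reflection \<open>t\<close> of \<open>W\<close> exchanges two residue classes modulo \<open>D\<close>
  by a translation, and if \<open>x \<circ> t\<close> is longer than \<open>x\<close> then \<open>x\<close> keeps every pair \<open>t u < u\<close> in
  order: otherwise, cutting a reduced word of \<open>x\<close> at the letter where the pair first gets inverted
  shows that \<open>t\<close> deletes that letter. Order preservation lets \<open>z \<mapsto> t z\<close> inject the corner of
  \<open>x\<close> into that of \<open>x \<circ> t\<close>, so corner counts increase along the Bruhat order. The margins do
  not depend on \<open>g\<close> at all: row and column sums of \<open>\<kappa>\<close> count the sets \<open>R\<^sub>i\<close>, the outer rows and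
  columns being folded in half by the symmetries \<open>z \<mapsto> -z\<close> and \<open>z \<mapsto> D - z\<close>.\<close>

section \<open>The group W\<close>

lemma DD_pos: "DD d > 0"
  by (simp add: DD_def)

lemma Wgrp_bij: "g \<in> Wgrp d \<Longrightarrow> bij g"
  by (simp add: Wgrp_def)

lemma Wgrp_inj: "g \<in> Wgrp d \<Longrightarrow> inj g"
  by (simp add: Wgrp_def bij_def)

lemma Wgrp_minus: "g \<in> Wgrp d \<Longrightarrow> g (- i) = - g i"
  by (simp add: Wgrp_def)

lemma Wgrp_period: "g \<in> Wgrp d \<Longrightarrow> g (i + DD d) = g i + DD d"
  by (simp add: Wgrp_def)

lemma Wgrp_shift:
  assumes g: "g \<in> Wgrp d"
  shows "g (i + m * DD d) = g i + m * DD d"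
proof (induction m rule: int_induct[where k = 0])
  case (step1 m)
  have "g (i + (m + 1) * DD d) = g (i + m * DD d + DD d)"
    by (simp add: algebra_simps)
  also have "\<dots> = g i + (m + 1) * DD d"
    using step1 Wgrp_period[OF g, of "i + m * DD d"] by (simp add: algebra_simps)
  finally show ?case .
next
  case (step2 m)
  have "g (i + (m - 1) * DD d) + DD d = g (i + (m - 1) * DD d + DD d)"
    by (rule Wgrp_period[OF g, symmetric])
  also have "\<dots> = g i + m * DD d"
    using step2 by (simp add: algebra_simps)
  finally show ?case
    by (simp add: algebra_simps)
qed simp

lemma Wgrp_zero: "g \<in> Wgrp d \<Longrightarrow> g 0 = 0"
  using Wgrp_minus[of g d 0] by simp

lemma Wgrp_reflect: "g \<in> Wgrp d \<Longrightarrow> g (DD d - i) = DD d - g i"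
  using Wgrp_shift[of g d "- i" 1] Wgrp_minus[of g d i] by simp

lemma id_in_Wgrp: "id \<in> Wgrp d"
  by (simp add: Wgrp_def)

lemma Wgrp_comp: "g \<in> Wgrp d \<Longrightarrow> h \<in> Wgrp d \<Longrightarrow> g \<circ> h \<in> Wgrp d"
  by (simp add: Wgrp_def bij_comp)

lemma Wgrp_inv_apply: "g \<in> Wgrp d \<Longrightarrow> inv g (g x) = x"
  by (simp add: Wgrp_inj inv_f_f)

lemma Wgrp_apply_inv: "g \<in> Wgrp d \<Longrightarrow> g (inv g x) = x"
  by (meson Wgrp_bij bij_inv_eq_iff)

lemma inv_in_Wgrp:
  assumes g: "g \<in> Wgrp d"
  shows "inv g \<in> Wgrp d"
proof -
  have "inv g (i + DD d) = inv g i + DD d" for i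
    using Wgrp_period[OF g, of "inv g i"] Wgrp_apply_inv[OF g] Wgrp_inv_apply[OF g] by metis
  moreover have "inv g (- i) = - inv g i" for i
    using Wgrp_minus[OF g, of "inv g i"] Wgrp_apply_inv[OF g] Wgrp_inv_apply[OF g] by metis
  ultimately show ?thesis
    using Wgrp_bij[OF g] by (simp add: Wgrp_def bij_imp_bij_inv)
qed

lemma Wgrp_translate_cong:
  assumes g: "g \<in> Wgrp d" and "[p = u] (mod DD d)"
  shows "g (u + (q - p)) = g u + (g q - g p)"
proof -
  obtain k where u: "u = p + k * DD d"
    using assms(2) by (auto simp: cong_iff_lin mult.commute)
  have "g (u + (q - p)) = g (q + k * DD d)"
    by (simp add: u algebra_simps)
  then show ?thesis
    using Wgrp_shift[OF g] u by simp
qed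

lemma Wgrp_cong_iff:
  assumes g: "g \<in> Wgrp d"
  shows "[g x = g y] (mod DD d) \<longleftrightarrow> [x = y] (mod DD d)"
proof
  assume "[g x = g y] (mod DD d)"
  then obtain k where "g y = g x + k * DD d"
    by (auto simp: cong_iff_lin mult.commute)
  then have "g y = g (x + k * DD d)"
    using Wgrp_shift[OF g] by simp
  then have "y = x + DD d * k"
    using Wgrp_inj[OF g] by (simp add: inj_eq mult.commute)
  then show "[x = y] (mod DD d)"
    by (auto simp: cong_iff_lin)
next
  assume "[x = y] (mod DD d)"
  then obtain k where "y = x + k * DD d"
    by (auto simp: cong_iff_lin mult.commute)
  then show "[g x = g y] (mod DD d)"
    using Wgrp_shift[OF g] by (simp add: cong_iff_lin mult.commute)
qed

section \<open>Reflections\<close>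

lemma cong_add_iff_diff: "[z + c = y] (mod m) \<longleftrightarrow> [z = y - c] (mod (m::int))"
  by (simp add: cong_iff_dvd_diff algebra_simps)

lemma cong_add_modulus_iff: "[z + m = y] (mod m) \<longleftrightarrow> [z = y] (mod (m::int))"
  using dvd_add_right_iff[of m m "z - y"] by (simp add: cong_iff_dvd_diff algebra_simps)

text \<open>The map exchanging the residue classes of \<open>p\<close> and \<open>q\<close> modulo \<open>D\<close> (and with them those
  of \<open>-q\<close> and \<open>-p\<close>) by translation; every reflection of \<open>W\<close> is of this form for an
  admissible pair.\<close>

definition swap_refl :: "nat \<Rightarrow> int \<Rightarrow> int \<Rightarrow> int \<Rightarrow> int" where
  "swap_refl d p q z =
    (if [z = p] (mod DD d) \<or> [z = - q] (mod DD d) then z + (q - p)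
     else if [z = q] (mod DD d) \<or> [z = - p] (mod DD d) then z + (p - q)
     else z)"

definition admissible_pair :: "nat \<Rightarrow> int \<Rightarrow> int \<Rightarrow> bool" where
  "admissible_pair d p q \<longleftrightarrow>
     \<not> [p = - p] (mod DD d) \<and> \<not> [q = - q] (mod DD d) \<and> \<not> [p = q] (mod DD d)"

lemma admissible_pair_classes_disjoint:
  assumes "admissible_pair d p q"
  shows "\<not> (([z = p] (mod DD d) \<or> [z = - q] (mod DD d)) \<and>
             ([z = q] (mod DD d) \<or> [z = - p] (mod DD d)))"
proof -
  have "\<not> [- p = - q] (mod DD d)"
    using assms by (simp add: admissible_pair_def cong_minus_minus_iff)
  with assms show ?thesis
    unfolding admissible_pair_def by (metis cong_sym cong_trans)
qed

lemma swap_refl_up: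
  "[z = p] (mod DD d) \<or> [z = - q] (mod DD d) \<Longrightarrow> swap_refl d p q z = z + (q - p)"
  by (simp add: swap_refl_def)

lemma swap_refl_down:
  "admissible_pair d p q \<Longrightarrow> [z = q] (mod DD d) \<or> [z = - p] (mod DD d) \<Longrightarrow>
    swap_refl d p q z = z + (p - q)"
  using admissible_pair_classes_disjoint by (fastforce simp: swap_refl_def)

lemma swap_refl_fixed:
  "\<not> ([z = p] (mod DD d) \<or> [z = - q] (mod DD d)) \<Longrightarrow>
   \<not> ([z = q] (mod DD d) \<or> [z = - p] (mod DD d)) \<Longrightarrow> swap_refl d p q z = z"
  by (simp add: swap_refl_def)

lemma swap_refl_moved_cases:
  "swap_refl d p q z \<noteq> z \<Longrightarrow>
    [z = p] (mod DD d) \<or> [z = - q] (mod DD d) \<or> [z = q] (mod DD d) \<or> [z = - p] (mod DD d)"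
  using swap_refl_fixed by blast

lemma swap_refl_sym:
  assumes "admissible_pair d p q"
  shows "swap_refl d q p = swap_refl d p q"
  using admissible_pair_classes_disjoint[OF assms] by (auto simp: swap_refl_def fun_eq_iff)

lemma swap_refl_involution:
  assumes v: "admissible_pair d p q"
  shows "swap_refl d p q (swap_refl d p q z) = z"
proof -
  consider "[z = p] (mod DD d) \<or> [z = - q] (mod DD d)"
    | "[z = q] (mod DD d) \<or> [z = - p] (mod DD d)"
    | "swap_refl d p q z = z"
    using swap_refl_moved_cases by blast
  then show ?thesis
  proof cases
    case 1
    then have "[z + (q - p) = q] (mod DD d) \<or> [z + (q - p) = - p] (mod DD d)"
      by (simp add: cong_add_iff_diff)
    then show ?thesis
      using 1 swap_refl_up swap_refl_down[OF v] by simp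
  next
    case 2
    then have "[z + (p - q) = p] (mod DD d) \<or> [z + (p - q) = - q] (mod DD d)"
      by (simp add: cong_add_iff_diff)
    then show ?thesis
      using 2 swap_refl_up swap_refl_down[OF v] by simp
  qed simp
qed

lemma swap_refl_in_Wgrp:
  assumes v: "admissible_pair d p q"
  shows "swap_refl d p q \<in> Wgrp d"
proof -
  have "bij (swap_refl d p q)"
    by (metis bijI' swap_refl_involution[OF v])
  moreover have "swap_refl d p q (z + DD d) = swap_refl d p q z + DD d" for z
    by (simp add: swap_refl_def cong_add_modulus_iff)
  moreover have "swap_refl d p q (- z) = - swap_refl d p q z" for z
    using admissible_pair_classes_disjoint[OF v, of z]
    by (auto simp: swap_refl_def cong_minus_minus_iff[of z, symmetric])
  ultimately show ?thesis
    by (simp add: Wgrp_def)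
qed

lemma Wgrp_swap_refl_commute:
  assumes w: "w \<in> Wgrp d"
  shows "w (swap_refl d p q u) = swap_refl d (w p) (w q) (w u)"
proof -
  have minus: "[w u = - w x] (mod DD d) \<longleftrightarrow> [u = - x] (mod DD d)" for x
    using Wgrp_cong_iff[OF w, of u "- x"] Wgrp_minus[OF w] by simp
  have translate: "w (u + (y - x)) = w u + (w y - w x)"
    if "[u = x] (mod DD d) \<or> [u = - y] (mod DD d)" for x y
    using that Wgrp_translate_cong[OF w, of x u y] Wgrp_translate_cong[OF w, of "- y" u "- x"]
    by (auto simp: cong_sym_eq Wgrp_minus[OF w])
  show ?thesis
    using translate[of p q] translate[of q p]
    by (simp add: swap_refl_def Wgrp_cong_iff[OF w] minus)
qed

lemma swap_refl_conj:
  assumes w: "w \<in> Wgrp d"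
  shows "w \<circ> swap_refl d p q \<circ> inv w = swap_refl d (w p) (w q)"
  using Wgrp_swap_refl_commute[OF w, of p q "inv w z" for z] Wgrp_apply_inv[OF w]
  by (simp add: fun_eq_iff)

lemma admissible_pair_image:
  assumes w: "w \<in> Wgrp d"
  shows "admissible_pair d (w p) (w q) \<longleftrightarrow> admissible_pair d p q"
  unfolding admissible_pair_def using Wgrp_cong_iff[OF w] Wgrp_minus[OF w] by metis

lemma swap_refl_moved_not_self_cong:
  assumes v: "admissible_pair d p q" and moved: "swap_refl d p q a \<noteq> a"
  shows "\<not> [a = - a] (mod DD d)"
proof
  assume a: "[a = - a] (mod DD d)"
  have "[a = p] (mod DD d) \<or> [a = - q] (mod DD d) \<or> [a = q] (mod DD d) \<or> [a = - p] (mod DD d)"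
    using swap_refl_moved_cases[OF moved] .
  then show False
    using v a unfolding admissible_pair_def
    by (metis cong_minus_minus_iff cong_sym cong_trans minus_minus)
qed

lemma cong_rewrite_right: "[a = a'] (mod m) \<Longrightarrow> [z = a] (mod m) \<longleftrightarrow> [z = a'] (mod m)"
  by (meson cong_sym cong_trans)

lemma swap_refl_from_point:
  assumes "[a = p] (mod DD d) \<or> [a = - q] (mod DD d)"
  shows "swap_refl d a (a + (q - p)) = swap_refl d p q"
  using assms
proof
  assume a: "[a = p] (mod DD d)"
  have b: "[a + (q - p) = q] (mod DD d)"
    using a by (simp add: cong_add_iff_diff)
  have "[- (a + (q - p)) = - q] (mod DD d)" "[- a = - p] (mod DD d)"
    using a b by (simp_all only: cong_uminus)
  with a b show ?thesis
    unfolding swap_refl_def fun_eq_iff by (simp only: cong_rewrite_right) simp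
next
  assume a: "[a = - q] (mod DD d)"
  have b: "[a + (q - p) = - p] (mod DD d)"
    using a by (simp add: cong_add_iff_diff)
  have "[- (a + (q - p)) = p] (mod DD d)" "[- a = q] (mod DD d)"
    using cong_uminus[OF a] cong_uminus[OF b] by (simp_all only: minus_minus)
  with a b show ?thesis
    unfolding swap_refl_def fun_eq_iff by (simp only: cong_rewrite_right) auto
qed

lemma swap_refl_through_moved_point:
  assumes v: "admissible_pair d p q" and moved: "swap_refl d p q a \<noteq> a"
  shows "swap_refl d p q = swap_refl d a (swap_refl d p q a)"
proof (cases "[a = p] (mod DD d) \<or> [a = - q] (mod DD d)")
  case True
  then show ?thesis
    using swap_refl_from_point swap_refl_up by metis
next
  case False
  then have "[a = q] (mod DD d) \<or> [a = - p] (mod DD d)"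
    using swap_refl_moved_cases[OF moved] by blast
  then show ?thesis
    using swap_refl_from_point[where p = q and q = p] swap_refl_down[OF v] swap_refl_sym[OF v] by metis
qed

lemma swap_refl_unique:
  assumes "admissible_pair d p q" "admissible_pair d p' q'"
    and "swap_refl d p q a = b" "swap_refl d p' q' a = b" "b \<noteq> a"
  shows "swap_refl d p q = swap_refl d p' q'"
  using swap_refl_through_moved_point assms by metis

section \<open>Simple reflections\<close>

definition sref_lo :: "nat \<Rightarrow> nat \<Rightarrow> int" where
  "sref_lo d k = (if k = 0 then -1 else int k)"

definition sref_hi :: "nat \<Rightarrow> nat \<Rightarrow> int" where
  "sref_hi d k = (if k = 0 then 1 else if k = d then int d + 2 else int k + 1)"

lemma sref_lo_less_hi: "sref_lo d k < sref_hi d k"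
  by (simp add: sref_lo_def sref_hi_def)

lemma cong_DD_iff_mod:
  assumes "- DD d < c" "c < DD d"
  shows "[i = c] (mod DD d) \<longleftrightarrow> i mod DD d = c \<or> i mod DD d = c + DD d"
proof -
  have m: "0 \<le> i mod DD d" "i mod DD d < DD d"
    using DD_pos[of d] by simp_all
  have "c mod DD d = (if 0 \<le> c then c else c + DD d)"
    using assms mod_pos_pos_trivial[of "c + DD d" "DD d"] by auto
  then show ?thesis
    unfolding cong_def using assms m by (cases "0 \<le> c") (auto simp del: pos_mod_bound)
qed

lemma sref_eq_swap_refl:
  assumes d: "2 \<le> d" and k: "k \<le> d"
  shows "sref d k = swap_refl d (sref_lo d k) (sref_hi d k)"
proof
  fix i
  define m where "m = i mod DD d"
  have D: "DD d = 2 * int d + 2"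
    by (simp add: DD_def)
  have m: "0 \<le> m" "m < DD d"
    using DD_pos[of d] by (auto simp: m_def)
  have i: "i = DD d * (i div DD d) + m"
    by (simp add: m_def)
  have s: "sref d k i = DD d * (i div DD d) + sres d k m"
    by (simp add: sref_def m_def)
  have cr: "[i = c] (mod DD d) \<longleftrightarrow> m = c \<or> m = c + DD d" if "- DD d < c" "c < DD d" for c
    using cong_DD_iff_mod[OF that] m_def by simp
  consider "k = 0" | "k = d" | "1 \<le> int k" "int k < int d"
    using k by linarith
  then show "sref d k i = swap_refl d (sref_lo d k) (sref_hi d k) i"
  proof cases
    case 1
    have "[i = -1] (mod DD d) \<longleftrightarrow> m = DD d - 1" "[i = 1] (mod DD d) \<longleftrightarrow> m = 1"
      using cr[of "-1"] cr[of 1] D m d by auto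
    then show ?thesis
      using 1 s i D d by (simp add: swap_refl_def sref_lo_def sref_hi_def sres_def Let_def)
  next
    case 2
    have "[i = int d] (mod DD d) \<longleftrightarrow> m = int d" "[i = - (int d + 2)] (mod DD d) \<longleftrightarrow> m = int d"
      "[i = int d + 2] (mod DD d) \<longleftrightarrow> m = int d + 2" "[i = - int d] (mod DD d) \<longleftrightarrow> m = int d + 2"
      using cr[of "int d"] cr[of "- (int d + 2)"] cr[of "int d + 2"] cr[of "- int d"] D m d by auto
    then show ?thesis
      using 2 s i D d by (simp add: swap_refl_def sref_lo_def sref_hi_def sres_def Let_def)
  next
    case 3
    have "[i = int k] (mod DD d) \<longleftrightarrow> m = int k"
      "[i = - (int k + 1)] (mod DD d) \<longleftrightarrow> m = DD d - int k - 1"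
      "[i = int k + 1] (mod DD d) \<longleftrightarrow> m = int k + 1" "[i = - int k] (mod DD d) \<longleftrightarrow> m = DD d - int k"
      using cr[of "int k"] cr[of "- (int k + 1)"] cr[of "int k + 1"] cr[of "- int k"] D m 3 by auto
    then show ?thesis
      using 3 s i D d by (simp add: swap_refl_def sref_lo_def sref_hi_def sres_def Let_def)
  qed
qed

lemma not_cong_if_near:
  assumes "0 < \<bar>x - y\<bar>" "\<bar>x - y\<bar> < DD d"
  shows "\<not> [x = y] (mod DD d)"
  using assms zdvd_not_zless[of "\<bar>x - y\<bar>" "DD d"] by (simp add: cong_iff_dvd_diff)

lemma admissible_sref_pair:
  assumes d: "2 \<le> d" and k: "k \<le> d"
  shows "admissible_pair d (sref_lo d k) (sref_hi d k)"
proof -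
  have D: "DD d = 2 * int d + 2"
    by (simp add: DD_def)
  have far: "\<not> [int d + 2 = - (int d + 2)] (mod DD d)"
  proof
    assume "[int d + 2 = - (int d + 2)] (mod DD d)"
    then have "[2 + DD d = 0] (mod DD d)"
      by (simp add: D cong_iff_dvd_diff algebra_simps)
    then have "[2 = 0] (mod DD d)"
      by (simp only: cong_add_modulus_iff)
    then show False
      using not_cong_if_near[of 2 0 d] D d by simp
  qed
  consider "k = 0" | "k = d" | "1 \<le> int k" "int k < int d"
    using k by linarith
  then show ?thesis
  proof cases
    case 1
    then show ?thesis
      using not_cong_if_near[of "-1" 1 d] not_cong_if_near[of 1 "-1" d] d D
      by (simp add: admissible_pair_def sref_lo_def sref_hi_def)
  next
    case 2
    then show ?thesis
      using not_cong_if_near[of "int d" "- int d" d] not_cong_if_near[of "int d" "int d + 2" d] far d D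
      by (simp add: admissible_pair_def sref_lo_def sref_hi_def)
  next
    case 3
    then show ?thesis
      using not_cong_if_near[of "int k" "- int k" d] not_cong_if_near[of "int k + 1" "- (int k + 1)" d]
        not_cong_if_near[of "int k" "int k + 1" d] D
      by (simp add: admissible_pair_def sref_lo_def sref_hi_def)
  qed
qed

lemma sref_in_Wgrp: "2 \<le> d \<Longrightarrow> k \<le> d \<Longrightarrow> sref d k \<in> Wgrp d"
  using sref_eq_swap_refl admissible_sref_pair swap_refl_in_Wgrp by metis

lemma sref_involution: "2 \<le> d \<Longrightarrow> k \<le> d \<Longrightarrow> sref d k (sref d k z) = z"
  using sref_eq_swap_refl admissible_sref_pair swap_refl_involution by metis

section \<open>Reduced words\<close>

definition word_prod :: "nat \<Rightarrow> nat list \<Rightarrow> int \<Rightarrow> int" where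
  "word_prod d ws = foldr (\<lambda>k f. sref d k \<circ> f) ws id"

lemma word_prod_Nil [simp]: "word_prod d [] = id"
  by (simp add: word_prod_def)

lemma word_prod_Cons [simp]: "word_prod d (k # ws) = sref d k \<circ> word_prod d ws"
  by (simp add: word_prod_def)

lemma word_prod_append: "word_prod d (xs @ ys) = word_prod d xs \<circ> word_prod d ys"
  by (induction xs) auto

lemma word_prod_in_Wgrp: "2 \<le> d \<Longrightarrow> set ws \<subseteq> {0..d} \<Longrightarrow> word_prod d ws \<in> Wgrp d"
  by (induction ws) (auto simp: id_in_Wgrp Wgrp_comp sref_in_Wgrp)

lemma Wgrp_eq_id_if_fixes:
  assumes y: "y \<in> Wgrp d" and fixed: "\<And>a. 1 \<le> a \<Longrightarrow> a \<le> int d \<Longrightarrow> y a = a"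
  shows "y = id"
proof
  fix z
  define m where "m = z mod DD d"
  have D: "DD d = 2 * int d + 2"
    by (simp add: DD_def)
  have m: "0 \<le> m" "m < DD d"
    using DD_pos[of d] by (auto simp: m_def)
  have "y m = m"
  proof -
    consider "m = 0" | "1 \<le> m \<and> m \<le> int d" | "m = int d + 1" | "int d + 2 \<le> m"
      using m D by linarith
    then show ?thesis
    proof cases
      case 1
      then show ?thesis using Wgrp_zero[OF y] by simp
    next
      case 3
      then show ?thesis using Wgrp_reflect[OF y, of "int d + 1"] D by simp
    next
      case 4
      then show ?thesis using Wgrp_reflect[OF y, of "DD d - m"] fixed[of "DD d - m"] m D by simp
    qed (use fixed in simp)
  qed
  then show "y z = id z"
    using Wgrp_shift[OF y, of m "z div DD d"] by (simp add: m_def)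
qed

lemma fixed_if_strict_mono_between:
  fixes y :: "int \<Rightarrow> int"
  assumes mono: "\<And>c. 1 \<le> c \<Longrightarrow> c < n \<Longrightarrow> y c < y (c + 1)"
    and lo: "0 < y 1" and hi: "y n \<le> n" and a: "1 \<le> a" "a \<le> n"
  shows "y a = a"
proof -
  have above: "a \<le> y a" if "1 \<le> a" "a \<le> n" for a
    using that
  proof (induction a rule: int_ge_induct)
    case (step i)
    then show ?case using mono[of i] by simp
  qed (use lo in simp)
  have below: "y (n - int k) \<le> n - int k" if "1 \<le> n - int k" for k
    using that
  proof (induction k)
    case (Suc k)
    then show ?case using mono[of "n - int (Suc k)"] by auto
  qed (use hi in simp)
  show ?thesis
    using above[OF a] below[of "nat (n - a)"] a by simp
qed

definition displacement :: "nat \<Rightarrow> (int \<Rightarrow> int) \<Rightarrow> int" where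
  "displacement d y = (\<Sum>a\<in>{1..int d}. (y a - a)\<^sup>2)"

lemma displacement_nonneg: "0 \<le> displacement d y"
  by (simp add: displacement_def sum_nonneg)

lemma displacement_diff:
  assumes "S \<subseteq> {1..int d}" and "\<And>a. a \<in> {1..int d} - S \<Longrightarrow> y' a = y a"
  shows "displacement d y' - displacement d y = (\<Sum>a\<in>S. (y' a - a)\<^sup>2 - (y a - a)\<^sup>2)"
proof -
  have "displacement d y' - displacement d y = (\<Sum>a\<in>{1..int d}. (y' a - a)\<^sup>2 - (y a - a)\<^sup>2)"
    by (simp add: displacement_def sum_subtractf)
  also have "\<dots> = (\<Sum>a\<in>S. (y' a - a)\<^sup>2 - (y a - a)\<^sup>2)"
    by (rule sum.mono_neutral_right) (use assms in auto)
  finally show ?thesis .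
qed

lemma Wgrp_eq_id_if_no_descent:
  assumes d: "2 \<le> d" and y: "y \<in> Wgrp d"
    and asc: "\<And>k. k \<le> d \<Longrightarrow> y (sref_lo d k) < y (sref_hi d k)"
  shows "y = id"
proof (rule Wgrp_eq_id_if_fixes[OF y])
  have lo: "0 < y 1"
    using asc[of 0] Wgrp_minus[OF y, of 1] by (simp add: sref_lo_def sref_hi_def)
  have hi: "y (int d) \<le> int d"
    using asc[of d] Wgrp_reflect[OF y, of "int d"] d by (simp add: sref_lo_def sref_hi_def DD_def)
  have mono: "y c < y (c + 1)" if "1 \<le> c" "c < int d" for c
  proof -
    have "nat c \<le> d" "nat c \<noteq> d" "nat c \<noteq> 0"
      using that by auto
    then show ?thesis
      using asc[of "nat c"] that by (simp add: sref_lo_def sref_hi_def)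
  qed
  show "y a = a" if "1 \<le> a" "a \<le> int d" for a
    using fixed_if_strict_mono_between[OF mono lo hi that] by blast
qed

lemma displacement_descent:
  assumes d: "2 \<le> d" and y: "y \<in> Wgrp d" and k: "k \<le> d"
    and desc: "y (sref_hi d k) < y (sref_lo d k)"
  shows "displacement d (y \<circ> sref d k) < displacement d y"
proof -
  have D: "DD d = 2 * int d + 2"
    by (simp add: DD_def)
  have s: "sref d k a = sres d k a" if "1 \<le> a" "a \<le> int d" for a
    using that D by (simp add: sref_def)
  consider "k = 0" | "k = d" | "1 \<le> int k" "int k < int d"
    using k by linarith
  then show ?thesis
  proof cases
    case 1
    have "displacement d (y \<circ> sref d k) - displacement d y
        = (\<Sum>a\<in>{1}. ((y \<circ> sref d k) a - a)\<^sup>2 - (y a - a)\<^sup>2)"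
      by (rule displacement_diff) (use s 1 D d in \<open>auto simp: sres_def Let_def\<close>)
    also have "\<dots> = (- y 1 - 1)\<^sup>2 - (y 1 - 1)\<^sup>2"
      using s[of 1] 1 d Wgrp_minus[OF y, of 1] by (simp add: sres_def Let_def)
    also have "\<dots> < 0"
      using desc 1 Wgrp_minus[OF y, of 1]
      by (simp add: sref_lo_def sref_hi_def power2_eq_square algebra_simps)
    finally show ?thesis by simp
  next
    case 2
    have "displacement d (y \<circ> sref d k) - displacement d y
        = (\<Sum>a\<in>{int d}. ((y \<circ> sref d k) a - a)\<^sup>2 - (y a - a)\<^sup>2)"
      by (rule displacement_diff) (use s 2 D d in \<open>auto simp: sres_def Let_def\<close>)
    also have "\<dots> = (DD d - y (int d) - int d)\<^sup>2 - (y (int d) - int d)\<^sup>2"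
      using s[of "int d"] 2 d Wgrp_reflect[OF y, of "int d"] D by (simp add: sres_def Let_def)
    also have "\<dots> < 0"
      using desc 2 Wgrp_reflect[OF y, of "int d"] D d
      by (simp add: sref_lo_def sref_hi_def power2_eq_square algebra_simps)
    finally show ?thesis by simp
  next
    case 3
    have "displacement d (y \<circ> sref d k) - displacement d y
        = (\<Sum>a\<in>{int k, int k + 1}. ((y \<circ> sref d k) a - a)\<^sup>2 - (y a - a)\<^sup>2)"
      by (rule displacement_diff) (use s 3 D d in \<open>auto simp: sres_def Let_def\<close>)
    also have "\<dots> = ((y (int k + 1) - int k)\<^sup>2 - (y (int k) - int k)\<^sup>2)
                   + ((y (int k) - int k - 1)\<^sup>2 - (y (int k + 1) - int k - 1)\<^sup>2)"
      using s[of "int k"] s[of "int k + 1"] 3 by (simp add: sres_def Let_def algebra_simps)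
    also have "\<dots> < 0"
      using desc 3 by (simp add: sref_lo_def sref_hi_def power2_eq_square algebra_simps)
    finally show ?thesis by simp
  qed
qed

text \<open>Right multiplication by a simple reflection at a descent decreases the displacement, so
  descending until no descent is left reaches the identity.\<close>

lemma Wgrp_word_exists:
  assumes d: "2 \<le> d"
  shows "y \<in> Wgrp d \<Longrightarrow> \<exists>ws. set ws \<subseteq> {0..d} \<and> word_prod d ws = y"
proof (induction "nat (displacement d y)" arbitrary: y rule: less_induct)
  case less
  show ?case
  proof (cases "\<forall>k \<le> d. y (sref_lo d k) < y (sref_hi d k)")
    case True
    then have "y = id"
      using Wgrp_eq_id_if_no_descent[OF d less.prems] by blast
    then show ?thesis
      by (intro exI[of _ "[]"]) simp
  next
    case False
    then obtain k where k: "k \<le> d" and "\<not> y (sref_lo d k) < y (sref_hi d k)"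
      by blast
    moreover have "y (sref_lo d k) \<noteq> y (sref_hi d k)"
      using Wgrp_inj[OF less.prems] sref_lo_less_hi[of d k] by (auto simp: inj_eq)
    ultimately have "y (sref_hi d k) < y (sref_lo d k)"
      by simp
    then have "nat (displacement d (y \<circ> sref d k)) < nat (displacement d y)"
      using displacement_descent[OF d less.prems k] displacement_nonneg[of d "y \<circ> sref d k"] by simp
    then obtain ws where ws: "set ws \<subseteq> {0..d}" "word_prod d ws = y \<circ> sref d k"
      using less.hyps Wgrp_comp[OF less.prems sref_in_Wgrp[OF d k]] by blast
    have "word_prod d (ws @ [k]) = y"
      using ws(2) sref_involution[OF d k] by (simp add: word_prod_append fun_eq_iff)
    then show ?thesis
      using ws k by (intro exI[of _ "ws @ [k]"]) auto
  qed
qed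

lemma wlen_le_length: "set ws \<subseteq> {0..d} \<Longrightarrow> wlen d (word_prod d ws) \<le> length ws"
  unfolding wlen_def word_prod_def by (rule Least_le) blast

lemma reduced_word_exists:
  assumes d: "2 \<le> d" and g: "g \<in> Wgrp d"
  obtains ws where "length ws = wlen d g" "set ws \<subseteq> {0..d}" "word_prod d ws = g"
proof -
  obtain ws where "set ws \<subseteq> {0..d}" "word_prod d ws = g"
    using Wgrp_word_exists[OF d g] by blast
  then have "\<exists>n ws. length ws = n \<and> set ws \<subseteq> {0..d} \<and> foldr (\<lambda>k f. sref d k \<circ> f) ws id = g"
    unfolding word_prod_def by blast
  then have "\<exists>ws. length ws = wlen d g \<and> set ws \<subseteq> {0..d} \<and> foldr (\<lambda>k f. sref d k \<circ> f) ws id = g"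
    unfolding wlen_def by (rule LeastI_ex)
  then show ?thesis
    using that unfolding word_prod_def by blast
qed

section \<open>Length-increasing reflections preserve order\<close>

lemma swap_refl_adjacent_inversion:
  assumes "q = p + 1" "a < b" "swap_refl d p q b < swap_refl d p q a"
  shows "swap_refl d p q a = b"
proof -
  have bound: "z - 1 \<le> swap_refl d p q z" "swap_refl d p q z \<le> z + 1" for z
    using assms(1) by (auto simp: swap_refl_def)
  show ?thesis
    using bound[of a] bound[of b] assms(2,3) by linarith
qed

text \<open>Here the reflection moves points by \<open>\<plusminus>2\<close> and the class of \<open>p + 1\<close> lies on its wall
  (\<open>p + 1 \<equiv> -(p + 1)\<close>), so an inverted pair of points off the walls must be \<open>(a, a + 2)\<close>.\<close>

lemma swap_refl_gap_two_inversion: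
  assumes q: "q = p + 2" and pq: "[- q = p] (mod DD d)" and ab: "a < b"
    and na: "\<not> [a = - a] (mod DD d)" and nb: "\<not> [b = - b] (mod DD d)"
    and gt: "swap_refl d p q b < swap_refl d p q a"
  shows "swap_refl d p q a = b"
proof -
  have "[- p = q] (mod DD d)"
    using cong_uminus[OF pq] by (simp add: cong_sym_eq)
  then have moves: "swap_refl d p q z = z + 2 \<and> [z = p] (mod DD d) \<or>
      swap_refl d p q z = z - 2 \<and> [z = q] (mod DD d) \<or> swap_refl d p q z = z" for z
    using pq q by (auto simp: swap_refl_def cong_rewrite_right)
  have "[- (p + 1) = p + 1] (mod DD d)"
    using pq q cong_add_rcancel[of "- (p + 2)" 1 p "DD d"] by (simp add: algebra_simps)
  then have mid: "\<not> [z = p + 1] (mod DD d)" if "\<not> [z = - z] (mod DD d)" for z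
    using that by (metis cong_minus_minus_iff cong_sym cong_trans)
  have "[a = p] (mod DD d) \<and> [b = q] (mod DD d) \<and> swap_refl d p q a = a + 2"
  proof -
    consider "swap_refl d p q a = a + 2" "[a = p] (mod DD d)" "b = a + 1"
      | "swap_refl d p q b = b - 2" "[b = q] (mod DD d)" "b = a + 1"
      | "swap_refl d p q a = a + 2" "[a = p] (mod DD d)"
        "swap_refl d p q b = b - 2" "[b = q] (mod DD d)"
      using moves[of a] moves[of b] ab gt by fastforce
    then show ?thesis
    proof cases
      case 1
      then show ?thesis
        using mid[OF nb] cong_add_rcancel[of a 1 p "DD d"] by simp
    next
      case 2
      then show ?thesis
        using mid[OF na] q cong_add_rcancel[of a 1 "p + 1" "DD d"] by (simp add: algebra_simps)
    qed simp
  qed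
  moreover have "b < a + 4"
    using calculation moves[of b] gt ab by auto
  moreover have "[b - a = 2] (mod DD d)"
    using calculation q cong_diff[of b q "DD d" a p] by simp
  ultimately show ?thesis
    using not_cong_if_near[of "b - a" 2 d] ab DD_pos[of d] by (fastforce simp: DD_def)
qed

lemma sref_inversion:
  assumes d: "2 \<le> d" and k: "k \<le> d" and ab: "a < b"
    and na: "\<not> [a = - a] (mod DD d)" and nb: "\<not> [b = - b] (mod DD d)"
    and gt: "sref d k b < sref d k a"
  shows "sref d k a = b"
proof (cases "k = 0 \<or> k = d")
  case True
  have "[- sref_hi d k = sref_lo d k] (mod DD d)"
    using True d dvd_minus_iff[of "DD d" "DD d"]
    by (auto simp: sref_lo_def sref_hi_def cong_iff_dvd_diff DD_def)
  moreover have "sref_hi d k = sref_lo d k + 2"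
    using True by (auto simp: sref_lo_def sref_hi_def)
  ultimately show ?thesis
    using swap_refl_gap_two_inversion[OF _ _ ab na nb] gt sref_eq_swap_refl[OF d k] by simp
next
  case False
  then have "sref_hi d k = sref_lo d k + 1"
    by (auto simp: sref_lo_def sref_hi_def)
  then show ?thesis
    using swap_refl_adjacent_inversion[OF _ ab] gt sref_eq_swap_refl[OF d k] by simp
qed

lemma word_first_inversion:
  assumes d: "2 \<le> d"
  shows "set ws \<subseteq> {0..d} \<Longrightarrow> a < b \<Longrightarrow> word_prod d ws b < word_prod d ws a \<Longrightarrow>
    \<exists>ws1 k ws2. ws = ws1 @ k # ws2 \<and> word_prod d ws2 a < word_prod d ws2 b \<and>
      sref d k (word_prod d ws2 b) < sref d k (word_prod d ws2 a)"
proof (induction ws)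
  case (Cons k ws)
  have ws: "set ws \<subseteq> {0..d}"
    using Cons.prems by simp
  show ?case
  proof (cases "word_prod d ws b < word_prod d ws a")
    case True
    then obtain ws1 k' ws2 where "ws = ws1 @ k' # ws2" "word_prod d ws2 a < word_prod d ws2 b"
        "sref d k' (word_prod d ws2 b) < sref d k' (word_prod d ws2 a)"
      using Cons.IH[OF ws Cons.prems(2)] by blast
    then show ?thesis
      by (intro exI[of _ "k # ws1"] exI[of _ k'] exI[of _ ws2]) simp
  next
    case False
    moreover have "word_prod d ws a \<noteq> word_prod d ws b"
      using Wgrp_inj[OF word_prod_in_Wgrp[OF d ws]] Cons.prems(2) by (simp add: inj_eq)
    ultimately show ?thesis
      using Cons.prems(3) by (intro exI[of _ "[]"] exI[of _ k] exI[of _ ws]) simp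
  qed
qed simp

lemma Wgrp_not_self_cong:
  "z \<in> Wgrp d \<Longrightarrow> \<not> [a = - a] (mod DD d) \<Longrightarrow> \<not> [z a = - z a] (mod DD d)"
  using Wgrp_cong_iff[of z d a "- a"] Wgrp_minus[of z d a] by simp

lemma wlen_swap_refl_less:
  assumes d: "2 \<le> d" and x: "x \<in> Wgrp d" and v: "admissible_pair d p q"
    and ta: "swap_refl d p q a = b" and ab: "a < b" and inverted: "x b < x a"
  shows "wlen d (x \<circ> swap_refl d p q) < wlen d x"
proof -
  obtain ws where ws: "length ws = wlen d x" "set ws \<subseteq> {0..d}" "word_prod d ws = x"
    using reduced_word_exists[OF d x] by blast
  obtain ws1 k ws2 where split: "ws = ws1 @ k # ws2"
    and lt: "word_prod d ws2 a < word_prod d ws2 b"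
    and gt: "sref d k (word_prod d ws2 b) < sref d k (word_prod d ws2 a)"
    using word_first_inversion[OF d ws(2) ab] inverted ws(3) by blast
  define z where "z = word_prod d ws2"
  have k: "k \<le> d"
    using ws(2) split by auto
  have z: "z \<in> Wgrp d" and iz: "inv z \<in> Wgrp d"
    using word_prod_in_Wgrp[OF d] inv_in_Wgrp ws(2) split by (auto simp: z_def)
  have na: "\<not> [a = - a] (mod DD d)" and nb: "\<not> [b = - b] (mod DD d)"
    using swap_refl_moved_not_self_cong[OF v] ta ab swap_refl_involution[OF v, of a] by auto
  have "sref d k (z a) = z b"
    using sref_inversion[OF d k lt[folded z_def] Wgrp_not_self_cong[OF z na]
        Wgrp_not_self_cong[OF z nb] gt[folded z_def]] .
  moreover have conj: "inv z \<circ> sref d k \<circ> z = swap_refl d (inv z (sref_lo d k)) (inv z (sref_hi d k))"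
    using swap_refl_conj[OF iz] Wgrp_bij[OF z] sref_eq_swap_refl[OF d k] by (simp add: inv_inv_eq)
  ultimately have "swap_refl d (inv z (sref_lo d k)) (inv z (sref_hi d k)) a = b"
    by (metis Wgrp_inv_apply[OF z] comp_apply)
  then have "swap_refl d p q = inv z \<circ> sref d k \<circ> z"
    using swap_refl_unique[OF v _ ta] conj ab admissible_pair_image[OF iz] admissible_sref_pair[OF d k]
    by auto
  moreover have "x = word_prod d ws1 \<circ> sref d k \<circ> z"
    using ws(3) split by (simp add: word_prod_append z_def comp_assoc)
  ultimately have "x \<circ> swap_refl d p q = word_prod d (ws1 @ ws2)"
    using Wgrp_apply_inv[OF z] sref_involution[OF d k]
    by (simp add: word_prod_append fun_eq_iff z_def)
  then show ?thesis
    using wlen_le_length[of "ws1 @ ws2" d] ws split by simp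
qed

lemma reflection_eq_swap_refl:
  assumes d: "2 \<le> d" and t: "t \<in> reflections d"
  obtains p q where "admissible_pair d p q" "t = swap_refl d p q"
proof -
  obtain w k where w: "w \<in> Wgrp d" "k \<le> d" "t = w \<circ> sref d k \<circ> inv w"
    using t unfolding reflections_def by blast
  then show ?thesis
    using that swap_refl_conj[OF w(1)] sref_eq_swap_refl[OF d w(2)]
      admissible_pair_image[OF w(1)] admissible_sref_pair[OF d w(2)] by metis
qed

lemma bruhat_step_order_preserving:
  assumes d: "2 \<le> d" and x: "x \<in> Wgrp d" and v: "admissible_pair d p q"
    and longer: "wlen d x < wlen d (x \<circ> swap_refl d p q)"
    and u: "swap_refl d p q u < u"
  shows "x (swap_refl d p q u) < x u"
proof (rule ccontr)
  assume "\<not> x (swap_refl d p q u) < x u"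
  moreover have "x (swap_refl d p q u) \<noteq> x u"
    using Wgrp_inj[OF x] u by (simp add: inj_eq)
  ultimately have "wlen d (x \<circ> swap_refl d p q) < wlen d x"
    using wlen_swap_refl_less[OF d x v _ u] swap_refl_involution[OF v] by simp
  then show False
    using longer by simp
qed

section \<open>Monotonicity of corner counts along the Bruhat order\<close>

definition corner_count :: "(int \<Rightarrow> int) \<Rightarrow> int \<Rightarrow> int \<Rightarrow> nat" where
  "corner_count g a b = card {z. b < z \<and> g z \<le> a}"

lemma corner_eq_image: "{..a} \<inter> g ` {b<..} = g ` {z. b < z \<and> g z \<le> a}"
  by auto

lemma card_corner_eq_corner_count:
  "inj g \<Longrightarrow> card ({..a} \<inter> g ` {b<..}) = corner_count g a b"
  by (simp add: corner_eq_image corner_count_def card_image inj_on_subset)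

lemma Wgrp_lower_bound:
  assumes g: "g \<in> Wgrp d"
  obtains C where "\<And>z. z - C \<le> g z"
proof
  define C where "C = (\<Sum>c\<in>{0..<DD d}. \<bar>g c - c\<bar>)"
  fix z
  have "\<bar>g (z mod DD d) - z mod DD d\<bar> \<le> C"
    unfolding C_def by (rule member_le_sum) (use DD_pos[of d] in auto)
  moreover have "g z = g (z mod DD d) + (z div DD d) * DD d"
    using Wgrp_shift[OF g, of "z mod DD d" "z div DD d"] by simp
  moreover have "z = z mod DD d + (z div DD d) * DD d"
    by simp
  ultimately show "z - C \<le> g z"
    by linarith
qed

lemma finite_corner:
  assumes g: "g \<in> Wgrp d"
  shows "finite {z. b < z \<and> g z \<le> a}"
proof -
  obtain C where C: "\<And>z. z - C \<le> g z"
    using Wgrp_lower_bound[OF g] by blast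
  have "{z. b < z \<and> g z \<le> a} \<subseteq> {b<..a + C}"
  proof clarify
    fix z assume "b < z" "g z \<le> a"
    then show "z \<in> {b<..a + C}"
      using C[of z] by simp
  qed
  then show ?thesis
    by (rule finite_subset) simp
qed

lemma corner_count_mono_swap_refl:
  assumes x: "x \<in> Wgrp d" and v: "admissible_pair d p q"
    and preserve: "\<And>u. swap_refl d p q u < u \<Longrightarrow> x (swap_refl d p q u) < x u"
  shows "corner_count x a b \<le> corner_count (x \<circ> swap_refl d p q) a b"
proof -
  let ?t = "swap_refl d p q"
  \<comment> \<open>Injection of the corner of \<open>x\<close> into that of \<open>x \<circ> t\<close>: if \<open>t z\<close> drops to or below \<open>b\<close>,
    then \<open>t z < z\<close>, so \<open>x (t z) < x z\<close> and \<open>z\<close> itself stays in the corner.\<close>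
  define f where "f z = (if b < ?t z then ?t z else z)" for z
  have tt: "?t (?t z) = z" for z
    using swap_refl_involution[OF v] .
  have "card {z. b < z \<and> x z \<le> a} \<le> card {z. b < z \<and> x (?t z) \<le> a}"
  proof (rule card_inj_on_le)
    show "inj_on f {z. b < z \<and> x z \<le> a}"
      by (rule inj_onI) (metis (mono_tags, lifting) f_def mem_Collect_eq tt)
    show "f ` {z. b < z \<and> x z \<le> a} \<subseteq> {z. b < z \<and> x (?t z) \<le> a}"
    proof clarify
      fix z assume z: "b < z" "x z \<le> a"
      show "b < f z \<and> x (?t (f z)) \<le> a"
      proof (cases "b < ?t z")
        case False
        then have "x (?t z) < x z"
          using preserve z by simp
        then show ?thesis
          using False z by (simp add: f_def)
      qed (use z tt in \<open>simp add: f_def\<close>)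
    qed
    show "finite {z. b < z \<and> x (?t z) \<le> a}"
      using finite_corner[OF Wgrp_comp[OF x swap_refl_in_Wgrp[OF v]]] by simp
  qed
  then show ?thesis
    by (simp add: corner_count_def)
qed

lemma corner_count_bruhat_mono:
  assumes d: "2 \<le> d" and "bruhat_le d h g"
  shows "corner_count h a b \<le> corner_count g a b"
proof -
  have "(h, g) \<in> (bruhat_step d)\<^sup>*"
    using assms(2) by (simp add: bruhat_le_def)
  then show ?thesis
  proof (induction rule: rtrancl_induct)
    case (step y z)
    obtain t where y: "y \<in> Wgrp d" and z: "z = y \<circ> t" and t: "t \<in> reflections d"
      and longer: "wlen d y < wlen d (y \<circ> t)"
      using step.hyps(2) unfolding bruhat_step_def by blast
    obtain p q where v: "admissible_pair d p q" and tpq: "t = swap_refl d p q"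
      using reflection_eq_swap_refl[OF d t] by blast
    have "corner_count y a b \<le> corner_count z a b"
      using corner_count_mono_swap_refl[OF y v] bruhat_step_order_preserving[OF d y v] longer
      by (simp add: z tpq)
    then show ?case
      using step.IH by simp
  qed simp
qed

section \<open>The sets \<open>R\<^sub>i\<close> as consecutive intervals\<close>

lemma lam0_0: "l \<noteq> [] \<Longrightarrow> lam0 l 0 = int (l ! 0)"
  by (simp add: lam0_def take_Suc_conv_app_nth)

lemma lam0_Suc: "Suc j < length l \<Longrightarrow> lam0 l (Suc j) = lam0 l j + int (l ! Suc j)"
  by (simp add: lam0_def take_Suc_conv_app_nth[of "Suc j"])

lemma lam0_mono:
  assumes "i \<le> j"
  shows "lam0 l i \<le> lam0 l j"
proof -
  have "take (Suc j) l = take (Suc i) l @ take (j - i) (drop (Suc i) l)"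
    using assms by (metis Suc_le_mono add_Suc le_add_diff_inverse take_add)
  then show ?thesis
    by (simp add: lam0_def)
qed

lemma lam0_r:
  assumes "l \<in> Lambda r d"
  shows "lam0 l r = int d - int (l ! (r + 1))"
proof -
  have len: "length l = r + 2" and "sum_list l = d"
    using assms by (auto simp: Lambda_def)
  then have "lam0 l (Suc r) = int d"
    by (simp add: lam0_def)
  then show ?thesis
    using lam0_Suc[of r l] len by simp
qed

lemma atLeastAtMost_eq_greaterThanAtMost: "{a..b} = {a - 1<..b :: int}"
  by auto

text \<open>\<open>Rend r d l i\<close> is the right end point of \<open>R\<^sub>i\<close>, computed from the residue of \<open>i\<close>
  modulo \<open>n = 2r + 2\<close>.\<close>

definition Rend_base :: "nat \<Rightarrow> nat \<Rightarrow> nat list \<Rightarrow> int \<Rightarrow> int" where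
  "Rend_base r d l m =
    (if m \<le> int r then lam0 l (nat m)
     else if m = int r + 1 then int d + 1 + int (l ! (r + 1))
     else DD d - 1 - lam0 l (nat (2 * int r + 1 - m)))"

definition Rend :: "nat \<Rightarrow> nat \<Rightarrow> nat list \<Rightarrow> int \<Rightarrow> int" where
  "Rend r d l i = i div (2 * int r + 2) * DD d + Rend_base r d l (i mod (2 * int r + 2))"

lemma Rend_shift: "Rend r d l (i + q * (2 * int r + 2)) = q * DD d + Rend r d l i"
  by (simp add: Rend_def distrib_right)

lemma Rset_shift: "Rset r d l (i + q * (2 * int r + 2)) = (+) (q * DD d) ` Rset r d l i"
proof -
  have "(i + q * (2 * int r + 2)) div (2 * int r + 2) = q + i div (2 * int r + 2)"
    "(i + q * (2 * int r + 2)) mod (2 * int r + 2) = i mod (2 * int r + 2)"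
    by simp_all
  then show ?thesis
    unfolding Rset_def Let_def by (simp add: image_image algebra_simps)
qed

lemma Rend_eq_base: "0 \<le> x \<Longrightarrow> x < 2 * int r + 2 \<Longrightarrow> Rend r d l x = Rend_base r d l x"
  by (simp add: Rend_def)

lemma Rset_residue:
  assumes "0 \<le> m" "m < 2 * int r + 2"
  shows "Rset r d l m = (if m \<le> int r + 1 then Rbase r d l (nat m)
    else (-) (DD d) ` Rbase r d l (nat (2 * int r + 2 - m)))"
  using assms by (simp add: Rset_def Let_def)

lemma Rset_eq_interval_reflected:
  assumes L: "l \<in> Lambda r d" and m: "int r + 2 \<le> m" "m < 2 * int r + 2"
  shows "Rset r d l m = {Rend r d l (m - 1)<..Rend r d l m} \<and> Rend r d l (m - 1) \<le> Rend r d l m"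
proof -
  define j where "j = nat (2 * int r + 2 - m)"
  have j: "1 \<le> j" "j \<le> r" "int j = 2 * int r + 2 - m"
    using m by (auto simp: j_def)
  have "Rset r d l m = (-) (DD d) ` {lam0 l (j - 1) + 1..lam0 l j}"
    using m j by (simp add: Rset_residue Rbase_def j_def)
  also have "\<dots> = {DD d - lam0 l j..DD d - (lam0 l (j - 1) + 1)}"
    by (rule image_diff_atLeastAtMost)
  finally have "Rset r d l m = {DD d - lam0 l j - 1<..DD d - (lam0 l (j - 1) + 1)}"
    by (simp only: atLeastAtMost_eq_greaterThanAtMost)
  moreover have "Rend r d l m = DD d - (lam0 l (j - 1) + 1)"
  proof -
    have "nat (2 * int r + 1 - m) = j - 1"
      using j by simp
    then show ?thesis
      using m Rend_eq_base[of m] by (simp add: Rend_base_def)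
  qed
  moreover have "Rend r d l (m - 1) = DD d - lam0 l j - 1"
  proof (cases "m = int r + 2")
    case True
    then show ?thesis
      using j lam0_r[OF L] Rend_eq_base[of "m - 1"] by (simp add: Rend_base_def DD_def)
  next
    case False
    then have "nat (2 * int r + 1 - (m - 1)) = j"
      using j by simp
    then show ?thesis
      using m False Rend_eq_base[of "m - 1"] by (simp add: Rend_base_def)
  qed
  ultimately show ?thesis
    using lam0_mono[of "j - 1" j l] by simp
qed

lemma Rset_eq_interval_base:
  assumes L: "l \<in> Lambda r d" and m: "0 \<le> m" "m < 2 * int r + 2"
  shows "Rset r d l m = {Rend r d l (m - 1)<..Rend r d l m} \<and> Rend r d l (m - 1) \<le> Rend r d l m"
proof -
  have "l \<noteq> []"
    using L by (auto simp: Lambda_def)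
  then have l0: "lam0 l 0 = int (l ! 0)"
    by (rule lam0_0)
  have lr: "lam0 l r = int d - int (l ! (r + 1))"
    using lam0_r[OF L] .
  consider "m = 0" | "1 \<le> m" "m \<le> int r" | "m = int r + 1" | "int r + 2 \<le> m"
    using m by linarith
  then show ?thesis
  proof cases
    case 1
    have "Rend_base r d l (2 * int r + 1) = DD d - 1 - int (l ! 0)"
      using l0 lr by (cases "r = 0") (simp_all add: Rend_base_def DD_def)
    then have "Rend r d l (- 1) = - int (l ! 0) - 1"
      using Rend_shift[of r d l "2 * int r + 1" "- 1"] Rend_eq_base[of "2 * int r + 1"] by simp
    then show ?thesis
      using 1 Rset_residue[OF m] l0 Rend_eq_base[of 0]
      by (simp add: Rbase_def Rend_base_def atLeastAtMost_eq_greaterThanAtMost)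
  next
    case 2
    then have "Rset r d l m = {lam0 l (nat m - 1) + 1..lam0 l (nat m)}"
      using m by (simp add: Rset_residue Rbase_def nat_diff_distrib)
    moreover have "Rend r d l m = lam0 l (nat m)"
      using 2 Rend_eq_base[of m] m by (simp add: Rend_base_def)
    moreover have "Rend r d l (m - 1) = lam0 l (nat m - 1)"
      using 2 Rend_eq_base[of "m - 1"] by (simp add: Rend_base_def nat_diff_distrib)
    ultimately show ?thesis
      using lam0_mono[of "nat m - 1" "nat m" l] by (simp add: atLeastAtMost_eq_greaterThanAtMost)
  next
    case 3
    then show ?thesis
      using Rset_residue[OF m] lr Rend_eq_base[of m] Rend_eq_base[of "m - 1"]
      by (simp add: Rbase_def Rend_base_def atLeastAtMost_eq_greaterThanAtMost)
  next
    case 4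
    then show ?thesis
      using Rset_eq_interval_reflected[OF L _ m(2)] by blast
  qed
qed

lemma
  assumes L: "l \<in> Lambda r d"
  shows Rset_eq_interval: "Rset r d l i = {Rend r d l (i - 1)<..Rend r d l i}"
    and Rend_mono_step: "Rend r d l (i - 1) \<le> Rend r d l i"
proof -
  define n where "n = 2 * int r + 2"
  define m where "m = i mod n"
  have m: "0 \<le> m" "m < 2 * int r + 2"
    by (simp_all add: m_def n_def)
  have i: "m + i div n * n = i" "m - 1 + i div n * n = i - 1"
    by (simp_all add: m_def)
  have "Rend r d l (i - 1) = i div n * DD d + Rend r d l (m - 1)"
    using Rend_shift[of r d l "m - 1" "i div n"] by (simp add: i n_def[symmetric])
  moreover have "Rend r d l i = i div n * DD d + Rend r d l m"
    using Rend_shift[of r d l m "i div n"] by (simp add: i n_def[symmetric])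
  moreover have "Rset r d l i = (+) (i div n * DD d) ` Rset r d l m"
    using Rset_shift[of r d l m "i div n"] by (simp add: i n_def[symmetric])
  ultimately show "Rset r d l i = {Rend r d l (i - 1)<..Rend r d l i}"
    and "Rend r d l (i - 1) \<le> Rend r d l i"
    using Rset_eq_interval_base[OF L m] by simp_all
qed

lemma crossing_point_exists:
  fixes E :: "int \<Rightarrow> int"
  assumes "E a < z" "z \<le> E b" "a \<le> b"
  shows "\<exists>x. E (x - 1) < z \<and> z \<le> E x"
  using assms(3,2)
proof (induction b rule: int_ge_induct)
  case (step b)
  then show ?case
    by (cases "z \<le> E b") (auto intro: exI[of _ "b + 1"])
qed (use assms(1) in simp)

context
  fixes r d :: nat and l :: "nat list"
  assumes L: "l \<in> Lambda r d"
begin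

lemma Rend_mono: "i \<le> j \<Longrightarrow> Rend r d l i \<le> Rend r d l j"
proof (induction j rule: int_ge_induct)
  case (step j)
  then show ?case
    using Rend_mono_step[OF L, of "j + 1"] by simp
qed simp

lemma lam0_first: "lam0 l 0 = int (l ! 0)"
proof -
  have "l \<noteq> []"
    using L by (auto simp: Lambda_def)
  then show ?thesis
    by (rule lam0_0)
qed

lemma Rend_0: "Rend r d l 0 = int (l ! 0)"
  using lam0_first by (simp add: Rend_def Rend_base_def)

lemma Rend_r: "Rend r d l (int r) = int d - int (l ! (r + 1))"
  using lam0_r[OF L] by (simp add: Rend_def Rend_base_def)

lemma Rset_0: "Rset r d l 0 = {- int (l ! 0)..int (l ! 0)}"
  by (simp add: Rset_def Rbase_def)

lemma Rset_r1: "Rset r d l (int r + 1) = {int d + 1 - int (l ! (r + 1))..int d + 1 + int (l ! (r + 1))}"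
proof -
  have "(int r + 1) mod (2 * int r + 2) = int r + 1" "(int r + 1) div (2 * int r + 2) = 0"
    by simp_all
  then show ?thesis
    by (simp add: Rset_def Rbase_def Let_def)
qed

lemma finite_Rset: "finite (Rset r d l i)"
  by (simp add: Rset_eq_interval[OF L])

lemma Rset_disjoint: "i \<noteq> j \<Longrightarrow> Rset r d l i \<inter> Rset r d l j = {}"
  using Rend_mono[of i "j - 1"] Rend_mono[of j "i - 1"]
  by (cases "i < j") (auto simp: Rset_eq_interval[OF L])

lemma Rset_covers: "\<exists>x. z \<in> Rset r d l x"
proof -
  define n where "n = 2 * int r + 2"
  define k where "k = \<bar>z\<bar> + int d + 1"
  have Rend_mult: "Rend r d l (q * n) = q * DD d + int (l ! 0)" for q
    using Rend_shift[of r d l 0 q] Rend_0 by (simp add: n_def)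
  have "int (l ! 0) \<le> int d"
    using lam0_mono[of 0 r l] lam0_r[OF L] lam0_first by linarith
  moreover have "k \<le> k * DD d" "\<bar>z\<bar> \<le> \<bar>z\<bar> * DD d"
    using mult_left_mono[of 1 "DD d" k] mult_left_mono[of 1 "DD d" "\<bar>z\<bar>"] DD_pos[of d]
    by (simp_all add: k_def)
  moreover have "Rend r d l (- k * n) = - (k * DD d) + int (l ! 0)"
    using Rend_mult[of "- k"] by simp
  ultimately have "Rend r d l (- k * n) < z" "z \<le> Rend r d l (\<bar>z\<bar> * n)"
    using Rend_mult[of "\<bar>z\<bar>"] k_def by linarith+
  moreover have "- k * n \<le> \<bar>z\<bar> * n"
    by (simp add: k_def n_def)
  ultimately obtain x where "Rend r d l (x - 1) < z" "z \<le> Rend r d l x"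
    using crossing_point_exists by blast
  then show ?thesis
    by (auto simp: Rset_eq_interval[OF L])
qed

lemma UN_Rset: "(\<Union>x. Rset r d l x) = UNIV"
  using Rset_covers by blast

lemma UN_Rset_atMost: "(\<Union>x\<in>{..i}. Rset r d l x) = {..Rend r d l i}"
proof (intro equalityI subsetI)
  fix z assume "z \<in> (\<Union>x\<in>{..i}. Rset r d l x)"
  then show "z \<in> {..Rend r d l i}"
    using Rend_mono by (fastforce simp: Rset_eq_interval[OF L])
next
  fix z assume z: "z \<in> {..Rend r d l i}"
  obtain x where x: "z \<in> Rset r d l x"
    using Rset_covers by blast
  then have "x \<le> i"
    using z Rend_mono[of i "x - 1"] by (force simp: Rset_eq_interval[OF L])
  then show "z \<in> (\<Union>x\<in>{..i}. Rset r d l x)"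
    using x by blast
qed

lemma UN_Rset_atLeast: "(\<Union>x\<in>{j..}. Rset r d l x) = {Rend r d l (j - 1)<..}"
proof (intro equalityI subsetI)
  fix z assume "z \<in> (\<Union>x\<in>{j..}. Rset r d l x)"
  then obtain x where "j \<le> x" "z \<in> Rset r d l x"
    by blast
  then show "z \<in> {Rend r d l (j - 1)<..}"
    using Rend_mono[of "j - 1" "x - 1"] by (simp add: Rset_eq_interval[OF L])
next
  fix z assume z: "z \<in> {Rend r d l (j - 1)<..}"
  obtain x where x: "z \<in> Rset r d l x"
    using Rset_covers by blast
  then have "j \<le> x"
    using z Rend_mono[of x "j - 1"] by (force simp: Rset_eq_interval[OF L])
  then show "z \<in> (\<Union>x\<in>{j..}. Rset r d l x)"
    using x by blast
qed

end


section \<open>Margins and corner sums of the matrices \<open>\<kappa>\<close>\<close>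

lemma fsum_card_disjoint_UN:
  assumes disj: "\<And>p p'. p \<in> P \<Longrightarrow> p' \<in> P \<Longrightarrow> p \<noteq> p' \<Longrightarrow> H p \<inter> H p' = {}"
    and fin: "finite (\<Union>p\<in>P. H p)"
  shows "fsum (\<lambda>p. int (card (H p))) P = int (card (\<Union>p\<in>P. H p))"
proof -
  define Q where "Q = {p \<in> P. H p \<noteq> {}}"
  have finH: "finite (H p)" if "p \<in> P" for p
    using fin that by (meson UN_I finite_subset subsetI)
  have supp: "{p \<in> P. int (card (H p)) \<noteq> 0} = Q"
    using finH by (auto simp: Q_def card_eq_0_iff)
  have "inj_on H Q"
    using disj by (fastforce simp: Q_def intro: inj_onI)
  moreover have "H ` Q \<subseteq> Pow (\<Union>p\<in>P. H p)"
    by (auto simp: Q_def)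
  ultimately have "finite Q"
    using fin by (meson finite_Pow_iff finite_subset inj_on_finite)
  have "fsum (\<lambda>p. int (card (H p))) P = int (\<Sum>p\<in>Q. card (H p))"
    by (simp only: fsum_def supp of_nat_sum)
  also have "\<dots> = int (card (\<Union>p\<in>Q. H p))"
    using card_UN_disjoint[of Q H] \<open>finite Q\<close> finH disj by (simp add: Q_def)
  also have "(\<Union>p\<in>Q. H p) = (\<Union>p\<in>P. H p)"
    by (auto simp: Q_def)
  finally show ?thesis .
qed

lemma card_split_by_involution:
  assumes fin: "finite Y" and inv: "\<And>y. \<phi> (\<phi> y) = y" and closed: "\<And>y. y \<in> Y \<Longrightarrow> \<phi> y \<in> Y"
    and g: "bij g" and comm: "\<And>z. g (\<phi> z) = \<phi> (g z)"
    and "A0 \<inter> A1 = {}" "A0 \<inter> \<phi> ` A1 = {}" "A1 \<inter> \<phi> ` A1 = {}"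
    and cover: "A0 \<union> A1 \<union> \<phi> ` A1 = UNIV"
  shows "card Y = card (Y \<inter> g ` A0) + 2 * card (Y \<inter> g ` A1)"
proof -
  have ig: "inj g"
    using g by (simp add: bij_def)
  have "inj \<phi>"
    by (metis inv injI)
  have gA2: "g ` \<phi> ` A1 = \<phi> ` g ` A1"
    using comm by (simp add: image_image)
  have disj: "g ` A0 \<inter> g ` A1 = {}" "g ` A0 \<inter> g ` \<phi> ` A1 = {}" "g ` A1 \<inter> g ` \<phi> ` A1 = {}"
    using assms(6-8) ig by (simp_all add: image_Int[symmetric])
  have "Y \<inter> g ` \<phi> ` A1 = \<phi> ` (Y \<inter> g ` A1)"
    unfolding gA2 using closed inv by (auto intro!: image_eqI) (metis IntI image_eqI)
  then have card_X2: "card (Y \<inter> g ` \<phi> ` A1) = card (Y \<inter> g ` A1)"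
    using \<open>inj \<phi>\<close> by (simp add: card_image inj_on_subset)
  have "g ` A0 \<union> g ` A1 \<union> g ` \<phi> ` A1 = UNIV"
    using g unfolding image_Un[symmetric] cover by (simp add: bij_def)
  then have "Y \<inter> (g ` A0 \<union> g ` A1 \<union> g ` \<phi> ` A1) = Y"
    by simp
  then have "(Y \<inter> g ` A0) \<union> (Y \<inter> g ` A1) \<union> (Y \<inter> g ` \<phi> ` A1) = Y"
    by (simp only: Int_Un_distrib)
  moreover have "card ((Y \<inter> g ` A0) \<union> (Y \<inter> g ` A1) \<union> (Y \<inter> g ` \<phi> ` A1))
      = card ((Y \<inter> g ` A0) \<union> (Y \<inter> g ` A1)) + card (Y \<inter> g ` \<phi> ` A1)"
    by (rule card_Un_disjoint) (use fin disj in blast)+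
  moreover have "card ((Y \<inter> g ` A0) \<union> (Y \<inter> g ` A1)) = card (Y \<inter> g ` A0) + card (Y \<inter> g ` A1)"
    by (rule card_Un_disjoint) (use fin disj in blast)+
  ultimately show ?thesis
    using card_X2 by simp
qed

definition margin :: "nat \<Rightarrow> nat \<Rightarrow> nat list \<Rightarrow> nat \<Rightarrow> int" where
  "margin r d l i =
    (if i = 0 then (int (card (Rset r d l 0)) - 1) div 2
     else if i \<le> r then int (card (Rset r d l (int i)))
     else (int (card (Rset r d l (int r + 1))) - 1) div 2)"

lemma kappa_transpose:
  assumes g: "g \<in> Wgrp d"
  shows "kappa r d mu (inv g) lam j i = kappa r d lam g mu i j"
proof -
  have "inv g ` (Rset r d lam i \<inter> g ` Rset r d mu j) = Rset r d mu j \<inter> inv g ` Rset r d lam i"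
    using Wgrp_inv_apply[OF g] Wgrp_apply_inv[OF g] by (auto intro!: image_eqI)
  moreover have "inj (inv g)"
    using Wgrp_bij[OF g] bij_betw_imp_inj_on bij_imp_bij_inv by blast
  ultimately show ?thesis
    unfolding kappa_def by (metis card_image inj_on_subset subset_UNIV)
qed

lemma colc_eq_rowc_transpose: "colc r A = rowc r (\<lambda>i j. A j i)"
  by (simp add: colc_def rowc_def)

context
  fixes r d :: nat and lam mu :: "nat list" and g :: "int \<Rightarrow> int"
  assumes Ll: "lam \<in> Lambda r d" and Lm: "mu \<in> Lambda r d" and g: "g \<in> Wgrp d"
begin

lemma fsum_kappa_row:
  "fsum (\<lambda>j. kappa r d lam g mu i j) S = int (card (Rset r d lam i \<inter> g ` (\<Union>j\<in>S. Rset r d mu j)))"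
proof -
  have "fsum (\<lambda>j. int (card (Rset r d lam i \<inter> g ` Rset r d mu j))) S
      = int (card (\<Union>j\<in>S. Rset r d lam i \<inter> g ` Rset r d mu j))"
  proof (rule fsum_card_disjoint_UN)
    fix j j' :: int assume "j \<noteq> j'"
    then have "g ` Rset r d mu j \<inter> g ` Rset r d mu j' = {}"
      using Rset_disjoint[OF Lm] Wgrp_inj[OF g] by (simp add: image_Int[symmetric])
    then show "(Rset r d lam i \<inter> g ` Rset r d mu j) \<inter> (Rset r d lam i \<inter> g ` Rset r d mu j') = {}"
      by blast
  qed (use finite_Rset[OF Ll, of i] in auto)
  moreover have "(\<Union>j\<in>S. Rset r d lam i \<inter> g ` Rset r d mu j) = Rset r d lam i \<inter> g ` (\<Union>j\<in>S. Rset r d mu j)"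
    by blast
  ultimately show ?thesis
    by (simp add: kappa_def)
qed

lemma sigma_kappa:
  "sigma (kappa r d lam g mu) i j = int (corner_count g (Rend r d lam i) (Rend r d mu (j - 1)))"
proof -
  let ?H = "\<lambda>p. Rset r d lam (fst p) \<inter> g ` Rset r d mu (snd p)"
  let ?P = "{(x, y). x \<le> i \<and> j \<le> y}"
  have U: "(\<Union>p\<in>?P. ?H p) = {..Rend r d lam i} \<inter> g ` {Rend r d mu (j - 1)<..}"
    unfolding UN_Rset_atMost[OF Ll, symmetric] UN_Rset_atLeast[OF Lm, symmetric] by force
  have "(\<lambda>(x, y). kappa r d lam g mu x y) = (\<lambda>p. int (card (?H p)))"
    by (auto simp: kappa_def)
  then have "sigma (kappa r d lam g mu) i j = fsum (\<lambda>p. int (card (?H p))) ?P"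
    by (simp only: sigma_def)
  also have "\<dots> = int (card (\<Union>p\<in>?P. ?H p))"
  proof (rule fsum_card_disjoint_UN)
    fix p p' :: "int \<times> int" assume "p \<noteq> p'"
    then have "Rset r d lam (fst p) \<inter> Rset r d lam (fst p') = {} \<or>
        g ` Rset r d mu (snd p) \<inter> g ` Rset r d mu (snd p') = {}"
      using Rset_disjoint[OF Ll] Rset_disjoint[OF Lm] Wgrp_inj[OF g]
      by (metis image_Int image_empty prod_eq_iff)
    then show "?H p \<inter> ?H p' = {}"
      by blast
  next
    show "finite (\<Union>p\<in>?P. ?H p)"
      unfolding U corner_eq_image using finite_corner[OF g] by simp
  qed
  also have "\<dots> = int (corner_count g (Rend r d lam i) (Rend r d mu (j - 1)))"
    unfolding U using card_corner_eq_corner_count[OF Wgrp_inj[OF g]] by simp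
  finally show ?thesis .
qed

lemma rowc_first:
  "(kappa r d lam g mu 0 0 - 1) div 2 + fsum (\<lambda>j. kappa r d lam g mu 0 j) {1..}
    = (int (card (Rset r d lam 0)) - 1) div 2"
proof -
  let ?Y = "Rset r d lam 0" and ?A1 = "{int (mu ! 0)<..}"
  have "fsum (\<lambda>j. kappa r d lam g mu 0 j) {1..} = int (card (?Y \<inter> g ` ?A1))"
    using fsum_kappa_row[of 0 "{1..}"] UN_Rset_atLeast[OF Lm, of 1] Rend_0[OF Lm] by simp
  moreover have "card ?Y = card (?Y \<inter> g ` Rset r d mu 0) + 2 * card (?Y \<inter> g ` ?A1)"
    by (rule card_split_by_involution[where \<phi> = uminus])
      (use finite_Rset[OF Ll] Wgrp_bij[OF g] Wgrp_minus[OF g] in \<open>auto simp: Rset_0[OF Ll] Rset_0[OF Lm]\<close>)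
  ultimately show ?thesis
    by (simp add: kappa_def)
qed

lemma rowc_last:
  "(kappa r d lam g mu (int r + 1) (int r + 1) - 1) div 2 + fsum (\<lambda>j. kappa r d lam g mu (int r + 1) j) {..int r}
    = (int (card (Rset r d lam (int r + 1))) - 1) div 2"
proof -
  let ?Y = "Rset r d lam (int r + 1)" and ?A1 = "{..int d - int (mu ! (r + 1))}"
  have "fsum (\<lambda>j. kappa r d lam g mu (int r + 1) j) {..int r} = int (card (?Y \<inter> g ` ?A1))"
    using fsum_kappa_row[of "int r + 1" "{..int r}"] UN_Rset_atMost[OF Lm, of "int r"] Rend_r[OF Lm]
    by simp
  moreover have "card ?Y = card (?Y \<inter> g ` Rset r d mu (int r + 1)) + 2 * card (?Y \<inter> g ` ?A1)"
    by (rule card_split_by_involution[where \<phi> = "(-) (DD d)"])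
      (use finite_Rset[OF Ll] Wgrp_bij[OF g] Wgrp_reflect[OF g]
        in \<open>auto simp: Rset_r1[OF Ll] Rset_r1[OF Lm] DD_def\<close>)
  ultimately show ?thesis
    by (simp add: kappa_def)
qed

lemma fsum_kappa_row_full: "fsum (\<lambda>j. kappa r d lam g mu i j) UNIV = int (card (Rset r d lam i))"
  using fsum_kappa_row[of i UNIV] UN_Rset[OF Lm] Wgrp_bij[OF g] by (simp add: bij_def)

lemma rowc_kappa: "rowc r (kappa r d lam g mu) = map (margin r d lam) [0..<r + 2]"
  unfolding rowc_def
proof (rule map_cong)
  fix i assume "i \<in> set [0..<r + 2]"
  then consider "i = 0" | "0 < i" "i \<le> r" | "i = r + 1"
    by fastforce
  then show "(if i = 0 then (kappa r d lam g mu 0 0 - 1) div 2 + fsum (\<lambda>j. kappa r d lam g mu 0 j) {1..}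
      else if i \<le> r then fsum (\<lambda>j. kappa r d lam g mu (int i) j) UNIV
      else (kappa r d lam g mu (int r + 1) (int r + 1) - 1) div 2
        + fsum (\<lambda>j. kappa r d lam g mu (int r + 1) j) {..int r}) = margin r d lam i"
    by cases (simp_all add: margin_def rowc_first rowc_last fsum_kappa_row_full)
qed simp

end

lemma colc_kappa:
  assumes "lam \<in> Lambda r d" "mu \<in> Lambda r d" and g: "g \<in> Wgrp d"
  shows "colc r (kappa r d lam g mu) = map (margin r d mu) [0..<r + 2]"
proof -
  have "(\<lambda>i j. kappa r d lam g mu j i) = kappa r d mu (inv g) lam"
    using kappa_transpose[OF g] by (simp add: fun_eq_iff)
  then show ?thesis
    using rowc_kappa[OF assms(2,1) inv_in_Wgrp[OF g]] by (simp only: colc_eq_rowc_transpose)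
qed

theorem lemma5p2p3:
  fixes r d :: nat and lam mu :: "nat list" and g h :: "int \<Rightarrow> int"
  assumes "2 \<le> d"
    and "lam \<in> Lambda r d" and "mu \<in> Lambda r d"
    and "g \<in> Wgrp d" and "h \<in> Wgrp d"
    and "bruhat_le d h g"
  shows "alg_le r (kappa r d lam h mu) (kappa r d lam g mu)"
proof -
  have "rowc r (kappa r d lam h mu) = rowc r (kappa r d lam g mu)"
    using rowc_kappa[OF assms(2,3,5)] rowc_kappa[OF assms(2,3,4)] by simp
  moreover have "colc r (kappa r d lam h mu) = colc r (kappa r d lam g mu)"
    using colc_kappa[OF assms(2,3,5)] colc_kappa[OF assms(2,3,4)] by simp
  moreover have "sigma (kappa r d lam h mu) i j \<le> sigma (kappa r d lam g mu) i j" for i j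
    using sigma_kappa[OF assms(2,3,5)] sigma_kappa[OF assms(2,3,4)]
      corner_count_bruhat_mono[OF assms(1,6)] by simp
  ultimately show ?thesis
    unfolding alg_le_def by blast
qed

end
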